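(* Let $\Omega=\{z\in\mathbb{C}:|z|=1\}$, $|\psi|<1$, and let $(Z_U,Z_V)$ have density $c(z_u,z_v)=\frac{1}{4\pi^2}\frac{1-|\psi|^2}{|1-\psi z_v\overline{z_u}|^2}$ on $\Omega\times\Omega$. Then for all $j,k\in\mathbb{Z}$, $$E(Z_U^jZ_V^k)=\begin{cases}\psi^j,& j=-k\ge0,\\ \overline{\psi}^{\,-j},& j=-k<0,\\ 0,&\text{otherwise.}\end{cases}$$
   Context: The density is with respect to arc-length measure on each circle; this distribution is denoted $BC_+(\psi)$. *)

theory Defs
  imports "HOL-Probability.Probability"
begin

definition arc_measure :: "complex measure" where
  "arc_measure = distr (restrict_space lborel {0..<2*pi}) borel (\<lambda>t. cis t)"

definition bc_density :: "complex \<Rightarrow> complex \<times> complex \<Rightarrow> real" where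
  "bc_density \<psi> = (\<lambda>(zu, zv). 1 / (4 * pi\<^sup>2) * (1 - (cmod \<psi>)\<^sup>2) / (cmod (1 - \<psi> * zv * cnj zu))\<^sup>2)"

end

theory Submission
  imports Defs
begin

(*
  Parametrize the two circles by z_u = cis s, z_v = cis t with (s, t) in [0, 2pi)^2.  With
  x = psi * cis (t - s) the density is the Poisson kernel (1 - |x|^2) / |1 - x|^2 / (4 pi^2), and
  since |x| = |psi| < 1 it equals (P + cnj P - 1) / (4 pi^2) with the geometric series
  P = sum_n x^n.  The series converges uniformly, so it can be integrated term by term against
  cis (j s) * cis (k t).  The n-th term of P is psi^n cis ((j - n) s) cis ((k + n) t); by
  orthogonality of the characters on the torus only n = j survives, and only if j = -k >= 0.
  The conjugate series contributes cnj psi ^ (-j) when j = -k <= 0, and at j = k = 0 the three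
  contributions add up to 1 + 1 - 1 = 1.
*)

lemma sums_power_if_int_eq:
  fixes c :: "'a::{monoid_mult, real_normed_vector}"
  shows "(\<lambda>n. if int n = j then c ^ n else 0) sums (if 0 \<le> j then c ^ nat j else 0)"
proof (cases "0 \<le> j")
  case True
  then have "(\<lambda>n. if int n = j then c ^ n else 0) = (\<lambda>n. if n = nat j then c ^ n else 0)"
    by (intro ext) auto
  with True show ?thesis using sums_single[of "nat j" "\<lambda>n. c ^ n"] by simp
qed simp

lemma
  fixes F :: "nat \<Rightarrow> 'a \<Rightarrow> 'b::{banach, second_countable_topology}"
  assumes M: "finite_measure M" and r: "0 \<le> r" "r < 1"
    and F_measurable: "\<And>n. F n \<in> borel_measurable M"
    and F_bound: "\<And>n x. x \<in> space M \<Longrightarrow> norm (F n x) \<le> r ^ n"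
  shows integrable_suminf_geometric_bound: "integrable M (\<lambda>x. \<Sum>n. F n x)"
    and integral_suminf_geometric_bound: "(\<integral>x. (\<Sum>n. F n x) \<partial>M) = (\<Sum>n. integral\<^sup>L M (F n))"
proof -
  have int: "integrable M (F n)" for n
    by (rule finite_measure.integrable_const_bound[OF M, where B="r ^ n"])
       (auto simp: F_measurable F_bound)
  have geometric: "summable (\<lambda>n. r ^ n)"
    using r by (simp add: summable_geometric)
  have summable_norm: "AE x in M. summable (\<lambda>n. norm (F n x))"
    by (intro AE_I2 summable_comparison_test'[OF geometric]) (simp add: F_bound)
  have "(\<integral>x. norm (F n x) \<partial>M) \<le> (\<integral>x. r ^ n \<partial>M)" for n
    using int F_bound finite_measure.integrable_const[OF M] by (intro integral_mono) auto
  then have "norm (\<integral>x. norm (F n x) \<partial>M) \<le> measure M (space M) * r ^ n" for n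
    by simp
  then have summable_integral: "summable (\<lambda>n. \<integral>x. norm (F n x) \<partial>M)"
    by (rule summable_comparison_test'[OF summable_mult[OF geometric]])
  show "integrable M (\<lambda>x. \<Sum>n. F n x)"
    by (rule integrable_suminf[OF int summable_norm summable_integral])
  show "(\<integral>x. (\<Sum>n. F n x) \<partial>M) = (\<Sum>n. integral\<^sup>L M (F n))"
    by (rule integral_suminf[OF int summable_norm summable_integral])
qed

lemma integral_distributed_density:
  fixes g :: "'b \<Rightarrow> 'c::{banach, second_countable_topology}"
  assumes X: "distributed M N X (\<lambda>x. ennreal (f x))"
    and f_nonneg: "\<And>x. x \<in> space N \<Longrightarrow> 0 \<le> f x"
    and g: "g \<in> borel_measurable N"
  shows "(\<integral>\<omega>. g (X \<omega>) \<partial>M) = (\<integral>x. f x *\<^sub>R g x \<partial>N)"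
proof -
  have "(\<integral>\<omega>. g (X \<omega>) \<partial>M) = integral\<^sup>L (distr M N X) g"
    using distributed_measurable[OF X] g by (rule integral_distr[symmetric])
  also have "\<dots> = integral\<^sup>L (density N (\<lambda>x. ennreal (f x))) g"
    by (simp add: distributed_distr_eq_density[OF X])
  also have "\<dots> = (\<integral>x. f x *\<^sub>R g x \<partial>N)"
  proof (rule integral_density[OF g])
    show "f \<in> borel_measurable N"
      by (rule distributed_real_measurable[OF _ X]) (rule f_nonneg)
  qed (auto intro: f_nonneg)
  finally show ?thesis .
qed

lemma poisson_kernel_geometric_series:
  fixes x :: complex
  assumes "cmod x < 1"
  shows "of_real ((1 - (cmod x)\<^sup>2) / (cmod (1 - x))\<^sup>2) = (\<Sum>n. x ^ n) + cnj (\<Sum>n. x ^ n) - 1"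
proof -
  have partial_fractions: "(a + b - a * b) / (a * b) = 1 / a + 1 / b - 1"
    if "a \<noteq> 0" "b \<noteq> 0" for a b :: complex
    using that by (simp add: field_simps)
  have "x \<noteq> 1"
    using assms by auto
  then have "1 - x \<noteq> 0" "1 - cnj x \<noteq> 0"
    by (auto simp: complex_eq_iff)
  have "of_real ((1 - (cmod x)\<^sup>2) / (cmod (1 - x))\<^sup>2) = (1 - x * cnj x) / ((1 - x) * (1 - cnj x))"
    by (simp only: of_real_divide of_real_diff of_real_1 complex_norm_square complex_cnj_diff complex_cnj_one)
  also have "1 - x * cnj x = (1 - x) + (1 - cnj x) - (1 - x) * (1 - cnj x)"
    by (simp add: algebra_simps)
  also have "\<dots> / ((1 - x) * (1 - cnj x)) = 1 / (1 - x) + 1 / (1 - cnj x) - 1"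
    by (rule partial_fractions) fact+
  also have "\<dots> = (\<Sum>n. x ^ n) + cnj (\<Sum>n. x ^ n) - 1"
    using assms by (simp add: suminf_geometric)
  finally show ?thesis .
qed

lemma power_cis_diff_mult_cis:
  "(a * cis (t - s)) ^ n * (cis (of_int j * s) * cis (of_int k * t)) =
     a ^ n * (cis (of_int (j - int n) * s) * cis (of_int (k + int n) * t))"
  by (simp only: power_mult_distrib Complex.DeMoivre mult.assoc cis_mult) (simp add: algebra_simps)

lemma cis_borel_measurable [measurable]: "cis \<in> borel_measurable borel"
  by (intro borel_measurable_continuous_onI continuous_intros)

lemma cnj_borel_measurable [measurable]: "cnj \<in> borel_measurable borel"
  by (intro borel_measurable_continuous_onI continuous_intros)

lemma borel_measurable_power_int [measurable]:
  "(\<lambda>z::'a::{real_normed_field}. z powi m) \<in> borel_measurable borel"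
proof -
  have "(\<lambda>z::'a. z powi m) = (\<lambda>z. if 0 \<le> m then z ^ nat m else inverse z ^ nat (- m))"
    by (auto simp: power_int_def)
  also have "\<dots> \<in> borel_measurable borel"
    by measurable
  finally show ?thesis .
qed

abbreviation period_measure :: "real measure" where
  "period_measure \<equiv> restrict_space lborel {0..<2*pi}"

abbreviation torus_measure :: "(real \<times> real) measure" where
  "torus_measure \<equiv> period_measure \<Otimes>\<^sub>M period_measure"

lemma emeasure_period_measure: "emeasure period_measure {0..<2*pi} = ennreal (2*pi)"
  by (subst emeasure_restrict_space) auto

interpretation period_measure: finite_measure period_measure
  by (rule finite_measureI) (simp add: space_restrict_space emeasure_period_measure)

interpretation torus_measure: pair_sigma_finite period_measure period_measure ..

lemma finite_measure_torus_measure: "finite_measure torus_measure"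
  by (intro finite_measure_pair_measure period_measure.finite_measure_axioms)

lemma ident_borel_measurable_period_measure [measurable]: "(\<lambda>s. s) \<in> borel_measurable period_measure"
  by (rule measurable_restrict_space1) simp

lemma integral_period_cis:
  "(\<integral>s. cis (of_int m * s) \<partial>period_measure) = (if m = 0 then of_real (2*pi) else 0)"
proof (cases "m = 0")
  case True
  then show ?thesis
    by (simp add: measure_def space_restrict_space emeasure_period_measure scaleR_conv_of_real)
next
  case False
  have "(\<integral>s. cis (of_int m * s) \<partial>period_measure) = (LBINT s=ereal 0..ereal (2*pi). cis (of_int m * s))"
    by (simp add: integral_restrict_space set_lebesgue_integral_def interval_integral_Ico)
  also have "\<dots> = cis (of_int m * (2*pi)) / (\<i> * of_int m) - cis (of_int m * 0) / (\<i> * of_int m)"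
  proof (rule interval_integral_FTC_finite)
    show "continuous_on {min 0 (2*pi)..max 0 (2*pi)} (\<lambda>s. cis (real_of_int m * s))"
      by (intro continuous_intros)
    show "((\<lambda>s. cis (of_int m * s) / (\<i> * of_int m)) has_vector_derivative cis (of_int m * s))
        (at s within {min 0 (2*pi)..max 0 (2*pi)})" for s
      unfolding has_vector_derivative_def using False
      by (auto intro!: derivative_eq_intros ext simp: field_simps scaleR_conv_of_real)
  qed
  also have "\<dots> = 0"
    using cis_multiple_2pi[of "of_int m"] by (simp add: mult.commute mult.left_commute)
  finally show ?thesis using False by simp
qed

lemma integral_torus_cis:
  "(\<integral>(s,t). cis (of_int a * s) * cis (of_int b * t) \<partial>torus_measure) =
     (if a = 0 \<and> b = 0 then of_real (4 * pi\<^sup>2) else 0)"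
proof -
  have "integrable torus_measure (\<lambda>(s,t). cis (of_int a * s) * cis (of_int b * t))"
    by (rule finite_measure.integrable_const_bound[OF finite_measure_torus_measure, where B=1])
       (auto simp: norm_mult)
  then have "(\<integral>(s,t). cis (of_int a * s) * cis (of_int b * t) \<partial>torus_measure)
      = (\<integral>s. (\<integral>t. cis (of_int a * s) * cis (of_int b * t) \<partial>period_measure) \<partial>period_measure)"
    by (rule torus_measure.integral_fst[symmetric])
  also have "\<dots> = (if a = 0 \<and> b = 0 then of_real (4 * pi\<^sup>2) else 0)"
    by (simp add: integral_period_cis power2_eq_square)
  finally show ?thesis .
qed

lemma
  fixes a :: complex
  assumes a: "cmod a < 1"
  shows integrable_torus_geometric_series_cis:
      "integrable torus_measure (\<lambda>(s,t). (\<Sum>n. (a * cis (t - s)) ^ n) * (cis (of_int j * s) * cis (of_int k * t)))"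
    and integral_torus_geometric_series_cis:
      "(\<integral>(s,t). (\<Sum>n. (a * cis (t - s)) ^ n) * (cis (of_int j * s) * cis (of_int k * t)) \<partial>torus_measure) =
         of_real (4 * pi\<^sup>2) * (if j = - k \<and> 0 \<le> j then a ^ nat j else 0)"
proof -
  let ?f = "(\<lambda>(s,t). (\<Sum>n. (a * cis (t - s)) ^ n) * (cis (of_int j * s) * cis (of_int k * t)))"
  define F where "F n = (\<lambda>(s,t). a ^ n * (cis (of_int (j - int n) * s) * cis (of_int (k + int n) * t)))" for n
  have F_measurable: "F n \<in> borel_measurable torus_measure" for n
    unfolding F_def by measurable
  have F_bound: "norm (F n z) \<le> cmod a ^ n" for n z
    by (simp add: F_def split_beta norm_mult norm_power)
  have "(\<Sum>n. (a * cis (t - s)) ^ n) * (cis (of_int j * s) * cis (of_int k * t)) = (\<Sum>n. F n (s,t))" for s t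
    using suminf_mult2[of "\<lambda>n. (a * cis (t - s)) ^ n"] a
    by (simp add: F_def summable_geometric norm_mult power_cis_diff_mult_cis)
  then have series: "?f = (\<lambda>z. \<Sum>n. F n z)"
    by auto
  show "integrable torus_measure ?f"
    unfolding series using a
    by (intro integrable_suminf_geometric_bound[OF finite_measure_torus_measure _ _ F_measurable F_bound]) auto
  have "integral\<^sup>L torus_measure ?f = (\<integral>z. (\<Sum>n. F n z) \<partial>torus_measure)"
    by (simp only: series)
  also have "\<dots> = (\<Sum>n. integral\<^sup>L torus_measure (F n))"
    using a by (intro integral_suminf_geometric_bound[OF finite_measure_torus_measure _ _ F_measurable F_bound]) auto
  also have "(\<lambda>n. integral\<^sup>L torus_measure (F n)) =
      (\<lambda>n. of_real (4 * pi\<^sup>2) * (if j = - k then 1 else 0) * (if int n = j then a ^ n else 0))"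
  proof
    fix n
    have "F n = (\<lambda>z. a ^ n * (\<lambda>(s,t). cis (of_int (j - int n) * s) * cis (of_int (k + int n) * t)) z)"
      by (auto simp: F_def)
    then have "integral\<^sup>L torus_measure (F n) =
        a ^ n * (if j - int n = 0 \<and> k + int n = 0 then of_real (4 * pi\<^sup>2) else 0)"
      by (simp only: integral_mult_right_zero integral_torus_cis)
    then show "integral\<^sup>L torus_measure (F n) =
        of_real (4 * pi\<^sup>2) * (if j = - k then 1 else 0) * (if int n = j then a ^ n else 0)"
      by auto
  qed
  also have "(\<Sum>n. of_real (4 * pi\<^sup>2) * (if j = - k then 1 else 0) * (if int n = j then a ^ n else 0)) =
      of_real (4 * pi\<^sup>2) * (if j = - k \<and> 0 \<le> j then a ^ nat j else 0)"
    using sums_mult[OF sums_power_if_int_eq[where j=j and c=a],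
        of "of_real (4 * pi\<^sup>2) * (if j = - k then 1 else 0)"]
    by (auto simp: sums_iff)
  finally show "integral\<^sup>L torus_measure ?f =
      of_real (4 * pi\<^sup>2) * (if j = - k \<and> 0 \<le> j then a ^ nat j else 0)" .
qed

lemma sets_arc_measure [measurable_cong]: "sets arc_measure = sets borel"
  by (simp add: arc_measure_def)

lemma arc_measure_pair_eq_distr_torus:
  "arc_measure \<Otimes>\<^sub>M arc_measure =
     distr torus_measure (borel \<Otimes>\<^sub>M borel) (\<lambda>(s,t). (cis s, cis t))"
  unfolding arc_measure_def
proof (rule pair_measure_distr)
  show "sigma_finite_measure (distr period_measure borel cis)"
    by (intro finite_measure.sigma_finite_measure finite_measure.finite_measure_distr
        period_measure.finite_measure_axioms) simp
qed simp_all

lemma integral_arc_measure_pair: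
  fixes h :: "complex \<times> complex \<Rightarrow> 'b::{banach, second_countable_topology}"
  assumes [measurable]: "h \<in> borel_measurable (borel \<Otimes>\<^sub>M borel)"
  shows "integral\<^sup>L (arc_measure \<Otimes>\<^sub>M arc_measure) h =
           (\<integral>(s,t). h (cis s, cis t) \<partial>torus_measure)"
  unfolding arc_measure_pair_eq_distr_torus by (subst integral_distr) (auto simp: split_beta')

lemma bc_density_nonneg: "cmod \<psi> \<le> 1 \<Longrightarrow> 0 \<le> bc_density \<psi> z"
  by (cases z) (simp add: bc_density_def abs_square_le_1)

lemma bc_density_borel_measurable [measurable]: "bc_density \<psi> \<in> borel_measurable (borel \<Otimes>\<^sub>M borel)"
  unfolding bc_density_def by measurable

lemma bc_density_cis:
  assumes "cmod \<psi> < 1"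
  shows "of_real (bc_density \<psi> (cis s, cis t)) =
           ((\<Sum>n. (\<psi> * cis (t - s)) ^ n) + cnj (\<Sum>n. (\<psi> * cis (t - s)) ^ n) - 1) / of_real (4 * pi\<^sup>2)"
proof -
  define x where "x = \<psi> * cis (t - s)"
  have "cmod x = cmod \<psi>"
    by (simp add: x_def norm_mult)
  moreover have "\<psi> * cis t * cnj (cis s) = x"
    by (simp add: x_def cis_cnj cis_mult mult.assoc)
  ultimately have "bc_density \<psi> (cis s, cis t) = (1 - (cmod x)\<^sup>2) / (cmod (1 - x))\<^sup>2 / (4 * pi\<^sup>2)"
    by (simp add: bc_density_def)
  then have "(of_real (bc_density \<psi> (cis s, cis t)) :: complex) =
      of_real ((1 - (cmod x)\<^sup>2) / (cmod (1 - x))\<^sup>2) / of_real (4 * pi\<^sup>2)"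
    by simp
  also have "\<dots> = ((\<Sum>n. x ^ n) + cnj (\<Sum>n. x ^ n) - 1) / of_real (4 * pi\<^sup>2)"
    using assms \<open>cmod x = cmod \<psi>\<close> poisson_kernel_geometric_series[of x] by simp
  finally show ?thesis
    by (simp only: x_def)
qed

lemma integral_torus_bc_density_moment:
  fixes \<psi> :: complex and j k :: int
  assumes \<psi>: "cmod \<psi> < 1"
  shows "(\<integral>(s,t). bc_density \<psi> (cis s, cis t) *\<^sub>R (cis s powi j * cis t powi k) \<partial>torus_measure) =
           (if j = - k \<and> 0 \<le> j then \<psi> powi j else if j = - k \<and> j < 0 then cnj \<psi> powi (- j) else 0)"
proof -
  define P where "P z = (\<Sum>n. (\<psi> * cis (snd z - fst z)) ^ n)" for z :: "real \<times> real"
  define e where "e j k z = cis (of_int j * fst z) * cis (of_int k * snd z)" for j k :: int and z :: "real \<times> real"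
  define c :: complex where "c = of_real (4 * pi\<^sup>2)"
  have Pe_integrable: "integrable torus_measure (\<lambda>z. P z * e j k z)" for j k
    using integrable_torus_geometric_series_cis[OF \<psi>] by (simp add: P_def e_def split_beta')
  have Pe_integral:
      "(\<integral>z. P z * e j k z \<partial>torus_measure) = c * (if j = - k \<and> 0 \<le> j then \<psi> ^ nat j else 0)" for j k
    using integral_torus_geometric_series_cis[OF \<psi>] by (simp add: P_def e_def c_def split_beta')
  have e_integrable: "integrable torus_measure (e j k)"
    unfolding e_def by (rule finite_measure.integrable_const_bound[OF finite_measure_torus_measure, where B=1])
       (auto simp: norm_mult)
  have e_integral: "(\<integral>z. e j k z \<partial>torus_measure) = (if j = 0 \<and> k = 0 then c else 0)"
    using integral_torus_cis[of j k] by (simp add: e_def c_def split_beta')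
  \<comment> \<open>Since cnj (e (- j) (- k)) = e j k, the conjugate series is the first one at (- j, - k).\<close>
  have "bc_density \<psi> (cis s, cis t) *\<^sub>R (cis s powi j * cis t powi k) =
      (P (s,t) * e j k (s,t) + cnj (P (s,t) * e (- j) (- k) (s,t)) - e j k (s,t)) / c" for s t
    using bc_density_cis[OF \<psi>, of s t]
    by (simp add: scaleR_conv_of_real P_def e_def c_def cis_power_int cis_cnj mult.commute ring_distribs)
  then have "(\<integral>(s,t). bc_density \<psi> (cis s, cis t) *\<^sub>R (cis s powi j * cis t powi k) \<partial>torus_measure) =
      (\<integral>z. P z * e j k z + cnj (P z * e (- j) (- k) z) - e j k z \<partial>torus_measure) / c"
    by (simp add: split_beta')
  also have "(\<integral>z. P z * e j k z + cnj (P z * e (- j) (- k) z) - e j k z \<partial>torus_measure) =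
      (\<integral>z. P z * e j k z \<partial>torus_measure) + cnj (\<integral>z. P z * e (- j) (- k) z \<partial>torus_measure)
        - (\<integral>z. e j k z \<partial>torus_measure)"
    using Pe_integrable e_integrable by (simp del: complex_cnj_mult)
  also have "(\<dots>) / c =
      (if j = - k \<and> 0 \<le> j then \<psi> powi j else if j = - k \<and> j < 0 then cnj \<psi> powi (- j) else 0)"
    by (auto simp: Pe_integral e_integral c_def power_int_def)
  finally show ?thesis .
qed

theorem mainTheorem8:
  fixes M :: "'a measure" and ZU ZV :: "'a \<Rightarrow> complex" and \<psi> :: complex and j k :: int
  assumes "prob_space M"
    and "cmod \<psi> < 1"
    and "distributed M (arc_measure \<Otimes>\<^sub>M arc_measure) (\<lambda>\<omega>. (ZU \<omega>, ZV \<omega>))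
           (\<lambda>z. ennreal (bc_density \<psi> z))"
  shows "prob_space.expectation M (\<lambda>\<omega>. ZU \<omega> powi j * ZV \<omega> powi k) =
           (if j = - k \<and> j \<ge> 0 then \<psi> powi j
            else if j = - k \<and> j < 0 then cnj \<psi> powi (- j)
            else 0)"
proof -
  have "prob_space.expectation M (\<lambda>\<omega>. ZU \<omega> powi j * ZV \<omega> powi k) =
      (\<integral>z. bc_density \<psi> z *\<^sub>R (fst z powi j * snd z powi k) \<partial>(arc_measure \<Otimes>\<^sub>M arc_measure))"
    using integral_distributed_density[OF assms(3) bc_density_nonneg, of "\<lambda>z. fst z powi j * snd z powi k"]
      assms(2) by simp
  also have "\<dots> =
      (\<integral>(s,t). bc_density \<psi> (cis s, cis t) *\<^sub>R (cis s powi j * cis t powi k) \<partial>torus_measure)"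
    by (subst integral_arc_measure_pair) auto
  also have "\<dots> =
      (if j = - k \<and> j \<ge> 0 then \<psi> powi j else if j = - k \<and> j < 0 then cnj \<psi> powi (- j) else 0)"
    using assms(2) by (rule integral_torus_bc_density_moment)
  finally show ?thesis .
qed

end
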